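(* Let $\langle A, \leq, \otimes, \mathbf{1}\rangle$ be a finitely distributive semi-lattice monoid (respectively, a distributive complete lattice monoid), with bottom element $\bot$. For $k\geq1$ let $Lex_k(A)$, $\leq_k$, $\otimes^k$, $\mathbf{1}^k$ be defined by: $Lex_1(A) = A$, $Lex_{k+1}(A) = I(A)\, Lex_k(A) \cup C(A)\{\bot\}^k$; $\leq_1=\leq$ and for $k\geq2$, $a_1 \ldots a_k \leq_k b_1 \ldots b_k$ iff $a_1 < b_1$, or $a_1 = b_1$ and $a_2 \ldots a_k \leq_{k-1} b_2 \ldots b_k$; $\otimes^k$ is componentwise and $\mathbf{1}^k=\mathbf{1}\ldots\mathbf{1}$. Then for every $k\geq1$, $\langle Lex_k(A), \leq_k, \otimes^k, \mathbf{1}^k\rangle$ is a finitely distributive semi-lattice monoid (respectively, a distributive complete lattice monoid).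
   Context: A semi-lattice monoid (SLM) is $\langle A,\leq,\otimes,\mathbf{1}\rangle$ where $\langle A,\otimes,\mathbf{1}\rangle$ is a commutative monoid and $\langle A,\leq\rangle$ is a partial order in which every finite subset (including $\emptyset$, whose LUB is the bottom $\bot$) has a least upper bound $\bigvee X$; a complete lattice monoid (CLM) is the same with every subset having a LUB. An SLM is finitely distributive if $a\otimes\bigvee X=\bigvee\{a\otimes x\mid x\in X\}$ for all $a\in A$ and finite $X\subseteq A$; a CLM is distributive if this holds for all $X\subseteq A$. $a<b$ means $a\leq b$, $a\neq b$. $I(A) = \{c \in A \mid \forall a,b \in A.\ a \otimes c = b \otimes c \Rightarrow a = b\}$, $C(A)=A\setminus I(A)$. For sets of sequences, $XY$ denotes concatenations, and $\{\bot\}^k$ is the singleton of the sequence of $k$ copies of $\bot$. *)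

theory Defs
  imports Main
begin

definition is_lub :: "'a set \<Rightarrow> ('a \<Rightarrow> 'a \<Rightarrow> bool) \<Rightarrow> 'a set \<Rightarrow> 'a \<Rightarrow> bool" where
  "is_lub S le X u \<longleftrightarrow> u \<in> S \<and> (\<forall>x\<in>X. le x u) \<and> (\<forall>y\<in>S. (\<forall>x\<in>X. le x y) \<longrightarrow> le u y)"

definition lub :: "'a set \<Rightarrow> ('a \<Rightarrow> 'a \<Rightarrow> bool) \<Rightarrow> 'a set \<Rightarrow> 'a" where
  "lub S le X = (THE u. is_lub S le X u)"

definition bot_of :: "'a set \<Rightarrow> ('a \<Rightarrow> 'a \<Rightarrow> bool) \<Rightarrow> 'a" where
  "bot_of S le = lub S le {}"

definition comm_monoid_on :: "'a set \<Rightarrow> ('a \<Rightarrow> 'a \<Rightarrow> 'a) \<Rightarrow> 'a \<Rightarrow> bool" where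
  "comm_monoid_on S mult one \<longleftrightarrow> one \<in> S \<and> (\<forall>a\<in>S. \<forall>b\<in>S. mult a b \<in> S)
    \<and> (\<forall>a\<in>S. \<forall>b\<in>S. \<forall>c\<in>S. mult (mult a b) c = mult a (mult b c))
    \<and> (\<forall>a\<in>S. \<forall>b\<in>S. mult a b = mult b a)
    \<and> (\<forall>a\<in>S. mult a one = a)"

definition partial_order_on' :: "'a set \<Rightarrow> ('a \<Rightarrow> 'a \<Rightarrow> bool) \<Rightarrow> bool" where
  "partial_order_on' S le \<longleftrightarrow> (\<forall>a\<in>S. le a a)
    \<and> (\<forall>a\<in>S. \<forall>b\<in>S. le a b \<and> le b a \<longrightarrow> a = b)
    \<and> (\<forall>a\<in>S. \<forall>b\<in>S. \<forall>c\<in>S. le a b \<and> le b c \<longrightarrow> le a c)"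

definition SLM :: "'a set \<Rightarrow> ('a \<Rightarrow> 'a \<Rightarrow> bool) \<Rightarrow> ('a \<Rightarrow> 'a \<Rightarrow> 'a) \<Rightarrow> 'a \<Rightarrow> bool" where
  "SLM S le mult one \<longleftrightarrow> comm_monoid_on S mult one \<and> partial_order_on' S le
    \<and> (\<forall>X. finite X \<and> X \<subseteq> S \<longrightarrow> (\<exists>u. is_lub S le X u))"

definition CLM :: "'a set \<Rightarrow> ('a \<Rightarrow> 'a \<Rightarrow> bool) \<Rightarrow> ('a \<Rightarrow> 'a \<Rightarrow> 'a) \<Rightarrow> 'a \<Rightarrow> bool" where
  "CLM S le mult one \<longleftrightarrow> comm_monoid_on S mult one \<and> partial_order_on' S le
    \<and> (\<forall>X. X \<subseteq> S \<longrightarrow> (\<exists>u. is_lub S le X u))"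

definition fin_distrib :: "'a set \<Rightarrow> ('a \<Rightarrow> 'a \<Rightarrow> bool) \<Rightarrow> ('a \<Rightarrow> 'a \<Rightarrow> 'a) \<Rightarrow> bool" where
  "fin_distrib S le mult \<longleftrightarrow>
    (\<forall>a\<in>S. \<forall>X. finite X \<and> X \<subseteq> S \<longrightarrow> mult a (lub S le X) = lub S le ((\<lambda>x. mult a x) ` X))"

definition distrib :: "'a set \<Rightarrow> ('a \<Rightarrow> 'a \<Rightarrow> bool) \<Rightarrow> ('a \<Rightarrow> 'a \<Rightarrow> 'a) \<Rightarrow> bool" where
  "distrib S le mult \<longleftrightarrow>
    (\<forall>a\<in>S. \<forall>X. X \<subseteq> S \<longrightarrow> mult a (lub S le X) = lub S le ((\<lambda>x. mult a x) ` X))"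

definition Icanc :: "'a set \<Rightarrow> ('a \<Rightarrow> 'a \<Rightarrow> 'a) \<Rightarrow> 'a set" where
  "Icanc S mult = {c \<in> S. \<forall>a\<in>S. \<forall>b\<in>S. mult a c = mult b c \<longrightarrow> a = b}"

definition Ccanc :: "'a set \<Rightarrow> ('a \<Rightarrow> 'a \<Rightarrow> 'a) \<Rightarrow> 'a set" where
  "Ccanc S mult = S - Icanc S mult"

text \<open>Sequences of length k are lists of length k. Lex k is only meaningful for k >= 1.\<close>
fun Lex :: "'a set \<Rightarrow> ('a \<Rightarrow> 'a \<Rightarrow> bool) \<Rightarrow> ('a \<Rightarrow> 'a \<Rightarrow> 'a) \<Rightarrow> nat \<Rightarrow> 'a list set" where
  "Lex S le mult 0 = {}"
| "Lex S le mult (Suc 0) = {[a] | a. a \<in> S}"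
| "Lex S le mult (Suc (Suc k)) =
     {c # s | c s. c \<in> Icanc S mult \<and> s \<in> Lex S le mult (Suc k)}
     \<union> {c # replicate (Suc k) (bot_of S le) | c. c \<in> Ccanc S mult}"

fun lex_le :: "('a \<Rightarrow> 'a \<Rightarrow> bool) \<Rightarrow> nat \<Rightarrow> 'a list \<Rightarrow> 'a list \<Rightarrow> bool" where
  "lex_le le 0 xs ys = True"
| "lex_le le (Suc 0) xs ys = le (hd xs) (hd ys)"
| "lex_le le (Suc (Suc k)) xs ys =
     ((le (hd xs) (hd ys) \<and> hd xs \<noteq> hd ys)
      \<or> (hd xs = hd ys \<and> lex_le le (Suc k) (tl xs) (tl ys)))"

definition lex_mult :: "('a \<Rightarrow> 'a \<Rightarrow> 'a) \<Rightarrow> 'a list \<Rightarrow> 'a list \<Rightarrow> 'a list" where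
  "lex_mult mult xs ys = map2 mult xs ys"

end

theory Submission
  imports Defs
begin

text \<open>
  For k \<ge> 1, Lex_{k+1}(A) is the lexicographic sum over the heads c \<in> A of the fibres Lex_k(A)
  (if c is cancellative) and {\<bottom>^k} (otherwise). In such a sum the LUB of X is the sequence m u, where m is
  the LUB of the heads of X and u is the LUB, taken in the fibre over m, of the tails of those
  elements of X with head m; so LUBs exist by induction on k.
  Multiplying by a = c s sends the head m to c \<otimes> m. If c \<otimes> m is cancellative then so are c and
  m, and cancelling c identifies the tails over c \<otimes> m with s times the tails over m, so the
  induction hypothesis applies. Otherwise both sides have tail \<bottom>^k, since \<bottom> = \<Or>\<emptyset> is absorbing
  by distributivity over the empty set.
\<close>

lemma lub_eqI:
  assumes "partial_order_on' S le" "is_lub S le X u"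
  shows "lub S le X = u"
  unfolding lub_def
proof (rule the_equality)
  show "is_lub S le X u" by fact
  show "v = u" if "is_lub S le X v" for v
    using assms that unfolding is_lub_def partial_order_on'_def by blast
qed

lemma partial_order_on'_subset:
  "partial_order_on' S le \<Longrightarrow> T \<subseteq> S \<Longrightarrow> partial_order_on' T le"
  unfolding partial_order_on'_def by blast

lemma is_lub_singleton: "le b b \<Longrightarrow> T \<subseteq> {b} \<Longrightarrow> is_lub {b} le T b"
  unfolding is_lub_def by auto

lemma partial_order_on'D:
  assumes "partial_order_on' S le"
  shows partial_order_on'_refl: "a \<in> S \<Longrightarrow> le a a"
    and partial_order_on'_antisym: "a \<in> S \<Longrightarrow> b \<in> S \<Longrightarrow> le a b \<Longrightarrow> le b a \<Longrightarrow> a = b"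
    and partial_order_on'_trans:
      "a \<in> S \<Longrightarrow> b \<in> S \<Longrightarrow> c \<in> S \<Longrightarrow> le a b \<Longrightarrow> le b c \<Longrightarrow> le a c"
  using assms unfolding partial_order_on'_def by blast+

lemma lex_le_refl:
  assumes po: "partial_order_on' A le"
  shows "length xs = Suc n \<Longrightarrow> set xs \<subseteq> A \<Longrightarrow> lex_le le (Suc n) xs xs"
  by (induction n arbitrary: xs)
    (auto simp: length_Suc_conv intro: partial_order_on'_refl[OF po])

lemma lex_le_antisym:
  assumes po: "partial_order_on' A le"
  shows "length xs = Suc n \<Longrightarrow> set xs \<subseteq> A \<Longrightarrow> length ys = Suc n \<Longrightarrow> set ys \<subseteq> A \<Longrightarrow>
    lex_le le (Suc n) xs ys \<Longrightarrow> lex_le le (Suc n) ys xs \<Longrightarrow> xs = ys"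
proof (induction n arbitrary: xs ys)
  case 0
  then obtain a b where "xs = [a]" "ys = [b]" by (auto simp: length_Suc_conv)
  with 0 show ?case using partial_order_on'_antisym[OF po] by simp
next
  case (Suc n)
  then obtain a s b t where xs: "xs = a # s" and ys: "ys = b # t"
    by (auto simp: length_Suc_conv)
  have "a = b" "lex_le le (Suc n) s t" "lex_le le (Suc n) t s"
    using Suc.prems partial_order_on'_antisym[OF po, of a b] unfolding xs ys by auto
  then show ?case
    using Suc.IH[of s t] Suc.prems unfolding xs ys by simp
qed

lemma lex_le_trans:
  assumes po: "partial_order_on' A le"
  shows "length xs = Suc n \<Longrightarrow> set xs \<subseteq> A \<Longrightarrow> length ys = Suc n \<Longrightarrow> set ys \<subseteq> A \<Longrightarrow>
    length zs = Suc n \<Longrightarrow> set zs \<subseteq> A \<Longrightarrow>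
    lex_le le (Suc n) xs ys \<Longrightarrow> lex_le le (Suc n) ys zs \<Longrightarrow> lex_le le (Suc n) xs zs"
proof (induction n arbitrary: xs ys zs)
  case 0
  then obtain a b c where "xs = [a]" "ys = [b]" "zs = [c]" by (auto simp: length_Suc_conv)
  with 0 show ?case using partial_order_on'_trans[OF po, of a b c] by simp
next
  case (Suc n)
  then obtain a s b t c u where xs: "xs = a # s" and ys: "ys = b # t" and zs: "zs = c # u"
    by (auto simp: length_Suc_conv)
  have abc: "a \<in> A" "b \<in> A" "c \<in> A"
    using Suc.prems unfolding xs ys zs by auto
  have "lex_le le (Suc n) s t \<Longrightarrow> lex_le le (Suc n) t u \<Longrightarrow> lex_le le (Suc n) s u"
    using Suc.IH[of s t u] Suc.prems unfolding xs ys zs by simp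
  then show ?case
    using Suc.prems partial_order_on'_trans[OF po abc] partial_order_on'_antisym[OF po abc(1,2)]
    unfolding xs ys zs by auto
qed

lemma partial_order_on'_lex_le:
  assumes "partial_order_on' A le"
  shows "partial_order_on' {xs. length xs = Suc n \<and> set xs \<subseteq> A} (lex_le le (Suc n))"
  unfolding partial_order_on'_def mem_Collect_eq
  using lex_le_refl[OF assms] lex_le_antisym[OF assms] lex_le_trans[OF assms] by blast

lemma is_lub_lex_Cons:
  fixes F :: "'a \<Rightarrow> 'a list set"
  assumes refl: "\<And>a. a \<in> A \<Longrightarrow> le a a"
    and X: "X \<subseteq> {c # s | c s. c \<in> A \<and> s \<in> F c}"
    and m: "is_lub A le (hd ` X) m"
    and u: "is_lub (F m) (lex_le le (Suc n)) {s. m # s \<in> X} u"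
  shows "is_lub {c # s | c s. c \<in> A \<and> s \<in> F c} (lex_le le (Suc (Suc n))) X (m # u)"
  unfolding is_lub_def
proof (intro conjI ballI impI)
  show "m # u \<in> {c # s | c s. c \<in> A \<and> s \<in> F c}"
    using m u unfolding is_lub_def by blast
next
  fix x assume "x \<in> X"
  moreover from this obtain c s where x: "x = c # s" using X by blast
  ultimately have "le c m" "c = m \<Longrightarrow> lex_le le (Suc n) s u"
    using m u unfolding is_lub_def by force+
  then show "lex_le le (Suc (Suc n)) x (m # u)"
    unfolding x by auto
next
  fix y assume "y \<in> {c # s | c s. c \<in> A \<and> s \<in> F c}"
    and y_ub: "\<forall>x\<in>X. lex_le le (Suc (Suc n)) x y"
  then obtain d v where y: "y = d # v" "d \<in> A" "v \<in> F d" by blast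
  have "le (hd x) d" if "x \<in> X" for x
  proof -
    obtain c s where "x = c # s" "c \<in> A" using X \<open>x \<in> X\<close> by blast
    then show ?thesis using y_ub refl \<open>x \<in> X\<close> unfolding y by fastforce
  qed
  then have "le m d"
    using m y(2) unfolding is_lub_def by blast
  moreover have "lex_le le (Suc n) u v" if "m = d"
  proof -
    have "lex_le le (Suc n) s v" if "m # s \<in> X" for s
      using y_ub[rule_format, OF that] \<open>m = d\<close> unfolding y by simp
    then show ?thesis
      using u y(3) \<open>m = d\<close> unfolding is_lub_def by blast
  qed
  ultimately show "lex_le le (Suc (Suc n)) (m # u) y"
    unfolding y by auto
qed

lemma lex_mult_Cons [simp]: "lex_mult mult (a # s) (b # t) = mult a b # lex_mult mult s t"
  by (simp add: lex_mult_def)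

lemma lex_mult_Nil [simp]: "lex_mult mult [] t = []" "lex_mult mult s [] = []"
  by (simp_all add: lex_mult_def)

lemma lex_mult_replicate_absorbing:
  "(\<And>x. x \<in> set s \<Longrightarrow> mult x b = b)
    \<Longrightarrow> lex_mult mult s (replicate (length s) b) = replicate (length s) b"
  by (induction s) auto

locale comm_monoid_carrier =
  fixes A :: "'a set" and mult :: "'a \<Rightarrow> 'a \<Rightarrow> 'a" and one :: 'a
  assumes comm_monoid: "comm_monoid_on A mult one"
begin

lemma mult_closed: "a \<in> A \<Longrightarrow> b \<in> A \<Longrightarrow> mult a b \<in> A"
  and mult_commute: "a \<in> A \<Longrightarrow> b \<in> A \<Longrightarrow> mult a b = mult b a"
  and mult_assoc: "a \<in> A \<Longrightarrow> b \<in> A \<Longrightarrow> c \<in> A \<Longrightarrow> mult (mult a b) c = mult a (mult b c)"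
  and one_closed: "one \<in> A"
  and mult_one: "a \<in> A \<Longrightarrow> mult a one = a"
  using comm_monoid unfolding comm_monoid_on_def by blast+

lemma Icanc_subset: "Icanc A mult \<subseteq> A"
  unfolding Icanc_def by blast

lemma one_Icanc: "one \<in> Icanc A mult"
  unfolding Icanc_def using one_closed mult_one by auto

lemma Icanc_cancel_left:
  "c \<in> Icanc A mult \<Longrightarrow> x \<in> A \<Longrightarrow> y \<in> A \<Longrightarrow> mult c x = mult c y \<Longrightarrow> x = y"
  unfolding Icanc_def using mult_commute by auto

lemma Icanc_mult_closed:
  assumes c: "c \<in> Icanc A mult" and d: "d \<in> Icanc A mult"
  shows "mult c d \<in> Icanc A mult"
proof -
  have "c \<in> A" "d \<in> A" using c d Icanc_subset by blast+
  have "x = y" if "x \<in> A" "y \<in> A" "mult x (mult c d) = mult y (mult c d)" for x y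
  proof -
    have "mult (mult x c) d = mult (mult y c) d"
      using that \<open>c \<in> A\<close> \<open>d \<in> A\<close> by (simp add: mult_assoc)
    then have "mult x c = mult y c"
      using d that \<open>c \<in> A\<close> mult_closed unfolding Icanc_def by blast
    then show "x = y"
      using c that unfolding Icanc_def by blast
  qed
  then show ?thesis
    unfolding Icanc_def using \<open>c \<in> A\<close> \<open>d \<in> A\<close> mult_closed by blast
qed

lemma Icanc_left_factor:
  assumes "c \<in> A" "d \<in> A" "mult c d \<in> Icanc A mult"
  shows "c \<in> Icanc A mult"
proof -
  have "x = y" if "x \<in> A" "y \<in> A" "mult x c = mult y c" for x y
  proof -
    have "mult x (mult c d) = mult y (mult c d)"
      using that assms(1,2) by (metis mult_assoc)
    then show "x = y"
      using assms(3) that unfolding Icanc_def by blast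
  qed
  then show ?thesis
    unfolding Icanc_def using assms(1) by blast
qed

lemma lex_mult_commute:
  "set s \<subseteq> A \<Longrightarrow> set t \<subseteq> A \<Longrightarrow> lex_mult mult s t = lex_mult mult t s"
proof (induction s arbitrary: t)
  case (Cons a s)
  then show ?case by (cases t) (auto simp: mult_commute)
qed simp

lemma lex_mult_assoc:
  "set s \<subseteq> A \<Longrightarrow> set t \<subseteq> A \<Longrightarrow> set u \<subseteq> A \<Longrightarrow>
    lex_mult mult (lex_mult mult s t) u = lex_mult mult s (lex_mult mult t u)"
proof (induction s arbitrary: t u)
  case (Cons a s)
  then show ?case by (cases t; cases u) (auto simp: mult_assoc)
qed simp

lemma lex_mult_replicate_one:
  "set s \<subseteq> A \<Longrightarrow> lex_mult mult s (replicate (length s) one) = s"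
  by (induction s) (auto simp: mult_one)

lemma comm_monoid_on_lex_mult:
  assumes S: "S \<subseteq> {xs. length xs = n \<and> set xs \<subseteq> A}"
    and "\<And>x y. x \<in> S \<Longrightarrow> y \<in> S \<Longrightarrow> lex_mult mult x y \<in> S"
    and "replicate n one \<in> S"
  shows "comm_monoid_on S (lex_mult mult) (replicate n one)"
  unfolding comm_monoid_on_def
proof (intro conjI ballI)
  fix x y z assume "x \<in> S" "y \<in> S" "z \<in> S"
  then show "lex_mult mult (lex_mult mult x y) z = lex_mult mult x (lex_mult mult y z)"
    using S lex_mult_assoc by blast
next
  fix x y assume "x \<in> S" "y \<in> S"
  then show "lex_mult mult x y = lex_mult mult y x"
    using S lex_mult_commute by blast
next
  fix x assume "x \<in> S"
  then show "lex_mult mult x (replicate n one) = x"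
    using S lex_mult_replicate_one by force
qed (use assms in auto)

lemma Cons_tails_lex_mult_image:
  assumes c: "c \<in> Icanc A mult" and m: "m \<in> A" and X: "hd ` X \<subseteq> A" "[] \<notin> X"
  shows "{t. mult c m # t \<in> lex_mult mult (c # s) ` X} = lex_mult mult s ` {t. m # t \<in> X}"
proof (intro equalityI subsetI)
  fix t assume "t \<in> {t. mult c m # t \<in> lex_mult mult (c # s) ` X}"
  then obtain x where x: "x \<in> X" "mult c m # t = lex_mult mult (c # s) x"
    by blast
  moreover obtain d w where "x = d # w"
    using x(1) X(2) by (cases x) auto
  ultimately have dw: "d # w \<in> X" "mult c m = mult c d" "t = lex_mult mult s w"
    by auto
  have "d \<in> A" using dw(1) X(1) by force
  then have "d = m" using dw(2) Icanc_cancel_left[OF c m] by simp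
  then show "t \<in> lex_mult mult s ` {t. m # t \<in> X}" using dw by auto
qed force

end

text \<open>
  With finitary = True the LUB and distributivity axioms range over finite subsets (finitely
  distributive SLMs), with finitary = False over all subsets (distributive CLMs).
\<close>

locale distrib_lattice_monoid = comm_monoid_carrier A mult one
  for A :: "'a set" and mult one +
  fixes le :: "'a \<Rightarrow> 'a \<Rightarrow> bool" and finitary :: bool
  assumes partial_order: "partial_order_on' A le"
    and lub_exists: "\<And>X. finitary \<longrightarrow> finite X \<Longrightarrow> X \<subseteq> A \<Longrightarrow> \<exists>u. is_lub A le X u"
    and mult_lub: "\<And>a X. a \<in> A \<Longrightarrow> finitary \<longrightarrow> finite X \<Longrightarrow> X \<subseteq> A \<Longrightarrow>
      mult a (lub A le X) = lub A le (mult a ` X)"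
begin

abbreviation bottom :: 'a where
  "bottom \<equiv> bot_of A le"

lemma is_lub_lub: "finitary \<longrightarrow> finite X \<Longrightarrow> X \<subseteq> A \<Longrightarrow> is_lub A le X (lub A le X)"
  using lub_exists lub_eqI[OF partial_order] by metis

lemma lub_closed: "finitary \<longrightarrow> finite X \<Longrightarrow> X \<subseteq> A \<Longrightarrow> lub A le X \<in> A"
  using is_lub_lub unfolding is_lub_def by blast

lemma bottom_closed: "bottom \<in> A"
  unfolding bot_of_def by (simp add: lub_closed)

lemma mult_bottom: "a \<in> A \<Longrightarrow> mult a bottom = bottom"
  unfolding bot_of_def using mult_lub[of a "{}"] by simp

definition Lex_tails :: "nat \<Rightarrow> 'a \<Rightarrow> 'a list set" where
  "Lex_tails n c =
    (if c \<in> Icanc A mult then Lex A le mult (Suc n) else {replicate (Suc n) bottom})"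

lemma Lex_Suc_Suc: "Lex A le mult (Suc (Suc n)) = {c # s | c s. c \<in> A \<and> s \<in> Lex_tails n c}"
  using Icanc_subset by (auto simp: Lex_tails_def Ccanc_def)

lemma Lex_subset_lists: "Lex A le mult (Suc n) \<subseteq> {xs. length xs = Suc n \<and> set xs \<subseteq> A}"
proof (induction n)
  case (Suc n)
  then show ?case
    unfolding Lex_Suc_Suc Lex_tails_def using bottom_closed by (force split: if_splits)
qed auto

lemma replicate_bottom_in_Lex: "replicate (Suc n) bottom \<in> Lex A le mult (Suc n)"
proof (induction n)
  case (Suc n)
  then have "replicate (Suc n) bottom \<in> Lex_tails n bottom"
    by (simp add: Lex_tails_def del: replicate_Suc)
  then show ?case
    unfolding Lex_Suc_Suc using bottom_closed by auto
qed (simp add: bottom_closed)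

lemma replicate_one_in_Lex: "replicate (Suc n) one \<in> Lex A le mult (Suc n)"
  by (induction n) (auto simp: Lex_Suc_Suc Lex_tails_def one_closed one_Icanc)

lemma Lex_tails_subset: "Lex_tails n c \<subseteq> Lex A le mult (Suc n)"
  unfolding Lex_tails_def using replicate_bottom_in_Lex by auto

lemma partial_order_on'_Lex: "partial_order_on' (Lex A le mult (Suc n)) (lex_le le (Suc n))"
  using partial_order_on'_subset[OF partial_order_on'_lex_le[OF partial_order] Lex_subset_lists] .

lemma lex_mult_replicate_bottom:
  assumes "s \<in> Lex A le mult (Suc n)"
  shows "lex_mult mult s (replicate (Suc n) bottom) = replicate (Suc n) bottom"
    and "lex_mult mult (replicate (Suc n) bottom) s = replicate (Suc n) bottom"
proof -
  have s: "length s = Suc n" "set s \<subseteq> A"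
    using assms Lex_subset_lists by auto
  then show *: "lex_mult mult s (replicate (Suc n) bottom) = replicate (Suc n) bottom"
    using lex_mult_replicate_absorbing[of s mult bottom] mult_bottom by auto
  have "set (replicate (Suc n) bottom) \<subseteq> A"
    using bottom_closed by (auto simp: in_set_replicate)
  then show "lex_mult mult (replicate (Suc n) bottom) s = replicate (Suc n) bottom"
    using lex_mult_commute s(2) * by metis
qed

lemma lex_mult_closed_Lex:
  "x \<in> Lex A le mult (Suc n) \<Longrightarrow> y \<in> Lex A le mult (Suc n)
    \<Longrightarrow> lex_mult mult x y \<in> Lex A le mult (Suc n)"
proof (induction n arbitrary: x y)
  case 0
  then show ?case by (auto simp: mult_closed)
next
  case (Suc n)
  then obtain c s d t where x: "x = c # s" "c \<in> A" "s \<in> Lex_tails n c"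
    and y: "y = d # t" "d \<in> A" "t \<in> Lex_tails n d"
    unfolding Lex_Suc_Suc by blast
  have "lex_mult mult s t \<in> Lex_tails n (mult c d)"
  proof (cases "mult c d \<in> Icanc A mult")
    case True
    then have "c \<in> Icanc A mult" "d \<in> Icanc A mult"
      using Icanc_left_factor x(2) y(2) mult_commute by metis+
    then show ?thesis
      using True Suc.IH x(3) y(3) by (simp add: Lex_tails_def)
  next
    case False
    then consider "s = replicate (Suc n) bottom" | "t = replicate (Suc n) bottom"
      using Icanc_mult_closed x(3) y(3) unfolding Lex_tails_def by (auto split: if_splits)
    then have "lex_mult mult s t = replicate (Suc n) bottom"
      using x(3) y(3) Lex_tails_subset lex_mult_replicate_bottom by cases blast+
    then show ?thesis
      using False by (simp add: Lex_tails_def del: replicate_Suc)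
  qed
  then show ?case
    unfolding x y Lex_Suc_Suc using mult_closed x(2) y(2) by auto
qed

lemma partial_order_on'_Lex_tails: "partial_order_on' (Lex_tails n c) (lex_le le (Suc n))"
  using partial_order_on'_subset[OF partial_order_on'_Lex Lex_tails_subset] .

lemma is_lub_Lex_tails_Ccanc:
  assumes "c \<notin> Icanc A mult" "T \<subseteq> Lex_tails n c"
  shows "is_lub (Lex_tails n c) (lex_le le (Suc n)) T (replicate (Suc n) bottom)"
proof -
  have "lex_le le (Suc n) (replicate (Suc n) bottom) (replicate (Suc n) bottom)"
    using partial_order_on'_refl[OF partial_order_on'_Lex replicate_bottom_in_Lex] .
  then show ?thesis
    using is_lub_singleton assms by (simp add: Lex_tails_def del: replicate_Suc)
qed

lemma lub_Lex_tails_Ccanc: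
  "c \<notin> Icanc A mult \<Longrightarrow> T \<subseteq> Lex_tails n c
    \<Longrightarrow> lub (Lex_tails n c) (lex_le le (Suc n)) T = replicate (Suc n) bottom"
  using lub_eqI[OF partial_order_on'_Lex_tails is_lub_Lex_tails_Ccanc] .

lemma is_lub_Lex_tails:
  assumes lub_Lex: "\<And>T. finitary \<longrightarrow> finite T \<Longrightarrow> T \<subseteq> Lex A le mult (Suc n) \<Longrightarrow>
      is_lub (Lex A le mult (Suc n)) (lex_le le (Suc n)) T
        (lub (Lex A le mult (Suc n)) (lex_le le (Suc n)) T)"
    and "finitary \<longrightarrow> finite T" "T \<subseteq> Lex_tails n c"
  shows "is_lub (Lex_tails n c) (lex_le le (Suc n)) T (lub (Lex_tails n c) (lex_le le (Suc n)) T)"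
proof (cases "c \<in> Icanc A mult")
  case True
  then show ?thesis using lub_Lex assms(2,3) by (simp add: Lex_tails_def)
next
  case False
  then show ?thesis
    using is_lub_Lex_tails_Ccanc lub_Lex_tails_Ccanc assms(3) by simp
qed

lemma is_lub_Lex_Suc_0:
  assumes "finitary \<longrightarrow> finite X" "X \<subseteq> Lex A le mult (Suc 0)"
  shows "is_lub (Lex A le mult (Suc 0)) (lex_le le (Suc 0)) X [lub A le (hd ` X)]"
proof -
  have "hd ` X \<subseteq> A"
    using assms(2) by auto
  then have "is_lub A le (hd ` X) (lub A le (hd ` X))"
    using is_lub_lub assms(1) by simp
  then show ?thesis
    using assms(2) unfolding is_lub_def by auto
qed

lemma is_lub_Lex_Suc_Suc:
  assumes lub_Lex: "\<And>T. finitary \<longrightarrow> finite T \<Longrightarrow> T \<subseteq> Lex A le mult (Suc n) \<Longrightarrow>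
      is_lub (Lex A le mult (Suc n)) (lex_le le (Suc n)) T
        (lub (Lex A le mult (Suc n)) (lex_le le (Suc n)) T)"
    and fin: "finitary \<longrightarrow> finite X" and X: "X \<subseteq> Lex A le mult (Suc (Suc n))"
  defines "m \<equiv> lub A le (hd ` X)"
  shows "is_lub (Lex A le mult (Suc (Suc n))) (lex_le le (Suc (Suc n))) X
    (m # lub (Lex_tails n m) (lex_le le (Suc n)) {s. m # s \<in> X})"
proof -
  have X': "X \<subseteq> {c # s | c s. c \<in> A \<and> s \<in> Lex_tails n c}"
    using X unfolding Lex_Suc_Suc .
  then have "hd ` X \<subseteq> A"
    by force
  then have m: "is_lub A le (hd ` X) m"
    unfolding m_def using is_lub_lub fin by simp
  have "{s. m # s \<in> X} \<subseteq> tl ` X"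
    by force
  then have T_fin: "finitary \<longrightarrow> finite {s. m # s \<in> X}"
    using fin finite_subset by blast
  have T_tails: "{s. m # s \<in> X} \<subseteq> Lex_tails n m"
    using X' by auto
  show ?thesis
    unfolding Lex_Suc_Suc
    using is_lub_lex_Cons[where le = le, OF partial_order_on'_refl[OF partial_order] X' m
        is_lub_Lex_tails[OF lub_Lex T_fin T_tails]] .
qed

lemma is_lub_Lex:
  "finitary \<longrightarrow> finite X \<Longrightarrow> X \<subseteq> Lex A le mult (Suc n) \<Longrightarrow>
    is_lub (Lex A le mult (Suc n)) (lex_le le (Suc n)) X
      (lub (Lex A le mult (Suc n)) (lex_le le (Suc n)) X)"
proof (induction n arbitrary: X)
  case 0
  then show ?case
    using is_lub_Lex_Suc_0 lub_eqI[OF partial_order_on'_Lex] by metis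
next
  case (Suc n)
  then show ?case
    using is_lub_Lex_Suc_Suc lub_eqI[OF partial_order_on'_Lex] by metis
qed

lemma lub_Lex_Suc_0:
  "finitary \<longrightarrow> finite X \<Longrightarrow> X \<subseteq> Lex A le mult (Suc 0) \<Longrightarrow>
    lub (Lex A le mult (Suc 0)) (lex_le le (Suc 0)) X = [lub A le (hd ` X)]"
  using lub_eqI[OF partial_order_on'_Lex is_lub_Lex_Suc_0] .

lemma lub_Lex_Suc_Suc:
  "finitary \<longrightarrow> finite X \<Longrightarrow> X \<subseteq> Lex A le mult (Suc (Suc n)) \<Longrightarrow>
    lub (Lex A le mult (Suc (Suc n))) (lex_le le (Suc (Suc n))) X =
      lub A le (hd ` X) # lub (Lex_tails n (lub A le (hd ` X))) (lex_le le (Suc n))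
        {s. lub A le (hd ` X) # s \<in> X}"
  using lub_eqI[OF partial_order_on'_Lex is_lub_Lex_Suc_Suc[OF is_lub_Lex]] .

lemma lub_Lex_tails_closed:
  assumes "finitary \<longrightarrow> finite T" "T \<subseteq> Lex_tails n c"
  shows "lub (Lex_tails n c) (lex_le le (Suc n)) T \<in> Lex A le mult (Suc n)"
proof -
  have "is_lub (Lex_tails n c) (lex_le le (Suc n)) T (lub (Lex_tails n c) (lex_le le (Suc n)) T)"
    using is_lub_Lex_tails[OF is_lub_Lex assms] .
  then show ?thesis
    unfolding is_lub_def using Lex_tails_subset by blast
qed

lemma lex_mult_lub_Lex_tails_Ccanc:
  assumes "mult c m \<notin> Icanc A mult" "s \<in> Lex_tails n c"
    and "finitary \<longrightarrow> finite T" "T \<subseteq> Lex_tails n m"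
  shows "lex_mult mult s (lub (Lex_tails n m) (lex_le le (Suc n)) T) = replicate (Suc n) bottom"
proof (cases "c \<in> Icanc A mult")
  case True
  then have "m \<notin> Icanc A mult"
    using assms(1) Icanc_mult_closed by blast
  then have "lub (Lex_tails n m) (lex_le le (Suc n)) T = replicate (Suc n) bottom"
    using lub_Lex_tails_Ccanc assms(4) by blast
  moreover have "s \<in> Lex A le mult (Suc n)"
    using assms(2) Lex_tails_subset by blast
  ultimately show ?thesis
    using lex_mult_replicate_bottom(1) by metis
next
  case False
  then have "s = replicate (Suc n) bottom"
    using assms(2) unfolding Lex_tails_def by simp
  then show ?thesis
    using lex_mult_replicate_bottom(2)[OF lub_Lex_tails_closed[OF assms(3,4)]] by simp
qed

lemma lex_mult_lub_Lex_Suc_0: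
  assumes a: "a \<in> Lex A le mult (Suc 0)"
    and X: "finitary \<longrightarrow> finite X" "X \<subseteq> Lex A le mult (Suc 0)"
  shows "lex_mult mult a (lub (Lex A le mult (Suc 0)) (lex_le le (Suc 0)) X) =
    lub (Lex A le mult (Suc 0)) (lex_le le (Suc 0)) (lex_mult mult a ` X)"
proof -
  obtain c where c: "a = [c]" "c \<in> A"
    using a by auto
  have "hd ` X \<subseteq> A"
    using X(2) by auto
  moreover have "hd ` lex_mult mult a ` X = mult c ` hd ` X"
    using X(2) unfolding c by force
  moreover have "lex_mult mult a ` X \<subseteq> Lex A le mult (Suc 0)"
    using lex_mult_closed_Lex a X(2) by blast
  ultimately have "lub (Lex A le mult (Suc 0)) (lex_le le (Suc 0)) (lex_mult mult a ` X) =
      [mult c (lub A le (hd ` X))]"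
    using lub_Lex_Suc_0 X(1) mult_lub[OF c(2)] by simp
  then show ?thesis
    using lub_Lex_Suc_0[OF X] unfolding c by (simp only: lex_mult_Cons lex_mult_Nil)
qed

lemma lex_mult_lub_Lex_tails:
  assumes IH: "\<And>a T. a \<in> Lex A le mult (Suc n) \<Longrightarrow> finitary \<longrightarrow> finite T \<Longrightarrow>
      T \<subseteq> Lex A le mult (Suc n) \<Longrightarrow>
      lex_mult mult a (lub (Lex A le mult (Suc n)) (lex_le le (Suc n)) T) =
        lub (Lex A le mult (Suc n)) (lex_le le (Suc n)) (lex_mult mult a ` T)"
    and c: "c \<in> A" "s \<in> Lex_tails n c" and m: "m \<in> A" and X: "hd ` X \<subseteq> A" "[] \<notin> X"
    and T: "finitary \<longrightarrow> finite {t. m # t \<in> X}" "{t. m # t \<in> X} \<subseteq> Lex_tails n m"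
    and Y: "{t. mult c m # t \<in> lex_mult mult (c # s) ` X} \<subseteq> Lex_tails n (mult c m)"
  shows "lex_mult mult s (lub (Lex_tails n m) (lex_le le (Suc n)) {t. m # t \<in> X}) =
    lub (Lex_tails n (mult c m)) (lex_le le (Suc n))
      {t. mult c m # t \<in> lex_mult mult (c # s) ` X}"
proof (cases "mult c m \<in> Icanc A mult")
  case True
  have c_Icanc: "c \<in> Icanc A mult"
    using Icanc_left_factor[OF c(1) m True] .
  have "m \<in> Icanc A mult"
    using Icanc_left_factor[OF m c(1)] True mult_commute[OF c(1) m] by simp
  then have tails: "Lex_tails n m = Lex A le mult (Suc n)"
    "Lex_tails n (mult c m) = Lex A le mult (Suc n)"
    using True by (simp_all add: Lex_tails_def)
  have "s \<in> Lex A le mult (Suc n)"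
    using c(2) c_Icanc by (simp add: Lex_tails_def)
  moreover have "{t. mult c m # t \<in> lex_mult mult (c # s) ` X} =
      lex_mult mult s ` {t. m # t \<in> X}"
    using Cons_tails_lex_mult_image[OF c_Icanc m X] .
  ultimately show ?thesis
    using IH T unfolding tails by simp
next
  case False
  then show ?thesis
    using lex_mult_lub_Lex_tails_Ccanc[OF False c(2) T] lub_Lex_tails_Ccanc[OF False Y] by simp
qed

lemma lex_mult_lub_Lex_Suc_Suc:
  assumes IH: "\<And>a T. a \<in> Lex A le mult (Suc n) \<Longrightarrow> finitary \<longrightarrow> finite T \<Longrightarrow>
      T \<subseteq> Lex A le mult (Suc n) \<Longrightarrow>
      lex_mult mult a (lub (Lex A le mult (Suc n)) (lex_le le (Suc n)) T) =
        lub (Lex A le mult (Suc n)) (lex_le le (Suc n)) (lex_mult mult a ` T)"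
    and a: "a \<in> Lex A le mult (Suc (Suc n))"
    and fin: "finitary \<longrightarrow> finite X" and X: "X \<subseteq> Lex A le mult (Suc (Suc n))"
  shows "lex_mult mult a (lub (Lex A le mult (Suc (Suc n))) (lex_le le (Suc (Suc n))) X) =
    lub (Lex A le mult (Suc (Suc n))) (lex_le le (Suc (Suc n))) (lex_mult mult a ` X)"
proof -
  let ?L = "Lex A le mult (Suc (Suc n))" and ?aX = "lex_mult mult a ` X"
  obtain c s where cs: "a = c # s" "c \<in> A" "s \<in> Lex_tails n c"
    using a unfolding Lex_Suc_Suc by blast
  define m where "m = lub A le (hd ` X)"
  have X': "X \<subseteq> {c # s | c s. c \<in> A \<and> s \<in> Lex_tails n c}"
    using X unfolding Lex_Suc_Suc .
  then have hd_X: "hd ` X \<subseteq> A" "[] \<notin> X"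
    by force+
  then have m: "m \<in> A"
    unfolding m_def using lub_closed fin by simp
  have "{t. m # t \<in> X} \<subseteq> tl ` X"
    by force
  then have T_fin: "finitary \<longrightarrow> finite {t. m # t \<in> X}"
    using fin finite_subset by blast
  have T_tails: "{t. m # t \<in> X} \<subseteq> Lex_tails n m"
    using X' by auto
  have aX: "finitary \<longrightarrow> finite ?aX"
    using fin by simp
  have aX_Lex: "?aX \<subseteq> ?L"
    using lex_mult_closed_Lex a X by blast
  then have Y: "{t. mult c m # t \<in> ?aX} \<subseteq> Lex_tails n (mult c m)"
    unfolding Lex_Suc_Suc by blast
  have "hd ` ?aX = mult c ` hd ` X"
    using X' unfolding cs by force
  then have lub_hd_aX: "lub A le (hd ` ?aX) = mult c m"
    unfolding m_def using mult_lub[OF cs(2) _ hd_X(1)] fin by simp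
  have "lex_mult mult a (lub ?L (lex_le le (Suc (Suc n))) X) =
      mult c m # lex_mult mult s (lub (Lex_tails n m) (lex_le le (Suc n)) {t. m # t \<in> X})"
    using lub_Lex_Suc_Suc[OF fin X] unfolding cs m_def by simp
  also have "\<dots> =
      mult c m # lub (Lex_tails n (mult c m)) (lex_le le (Suc n)) {t. mult c m # t \<in> ?aX}"
    using lex_mult_lub_Lex_tails[OF IH cs(2,3) m hd_X T_fin T_tails] Y unfolding cs by simp
  also have "\<dots> = lub ?L (lex_le le (Suc (Suc n))) ?aX"
    using lub_Lex_Suc_Suc[OF aX aX_Lex] lub_hd_aX by simp
  finally show ?thesis .
qed

lemma lex_mult_lub_Lex:
  "a \<in> Lex A le mult (Suc n) \<Longrightarrow> finitary \<longrightarrow> finite X \<Longrightarrow> X \<subseteq> Lex A le mult (Suc n) \<Longrightarrow>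
    lex_mult mult a (lub (Lex A le mult (Suc n)) (lex_le le (Suc n)) X) =
      lub (Lex A le mult (Suc n)) (lex_le le (Suc n)) (lex_mult mult a ` X)"
proof (induction n arbitrary: a X)
  case 0
  then show ?case by (rule lex_mult_lub_Lex_Suc_0)
next
  case (Suc n)
  then show ?case by (rule lex_mult_lub_Lex_Suc_Suc)
qed

theorem distrib_lattice_monoid_Lex:
  "distrib_lattice_monoid (Lex A le mult (Suc n)) (lex_mult mult) (replicate (Suc n) one)
    (lex_le le (Suc n)) finitary"
proof (intro distrib_lattice_monoid.intro comm_monoid_carrier.intro
    distrib_lattice_monoid_axioms.intro)
  show "comm_monoid_on (Lex A le mult (Suc n)) (lex_mult mult) (replicate (Suc n) one)"
    using comm_monoid_on_lex_mult[OF Lex_subset_lists lex_mult_closed_Lex replicate_one_in_Lex] .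
qed (use partial_order_on'_Lex is_lub_Lex lex_mult_lub_Lex in blast)+

end

lemma SLM_fin_distrib_iff:
  "SLM A le mult one \<and> fin_distrib A le mult \<longleftrightarrow> distrib_lattice_monoid A mult one le True"
  unfolding SLM_def fin_distrib_def distrib_lattice_monoid_def comm_monoid_carrier_def
    distrib_lattice_monoid_axioms_def
  by blast

lemma CLM_distrib_iff:
  "CLM A le mult one \<and> distrib A le mult \<longleftrightarrow> distrib_lattice_monoid A mult one le False"
  unfolding CLM_def distrib_def distrib_lattice_monoid_def comm_monoid_carrier_def
    distrib_lattice_monoid_axioms_def
  by blast

theorem theorem1:
  fixes A :: "'a set" and le :: "'a \<Rightarrow> 'a \<Rightarrow> bool" and mult :: "'a \<Rightarrow> 'a \<Rightarrow> 'a"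
    and one :: 'a and k :: nat
  assumes "k \<ge> 1"
  shows "(SLM A le mult one \<and> fin_distrib A le mult \<longrightarrow>
            SLM (Lex A le mult k) (lex_le le k) (lex_mult mult) (replicate k one)
            \<and> fin_distrib (Lex A le mult k) (lex_le le k) (lex_mult mult))
       \<and> (CLM A le mult one \<and> distrib A le mult \<longrightarrow>
            CLM (Lex A le mult k) (lex_le le k) (lex_mult mult) (replicate k one)
            \<and> distrib (Lex A le mult k) (lex_le le k) (lex_mult mult))"
proof -
  obtain n where k: "k = Suc n"
    using assms by (cases k) auto
  show ?thesis
    unfolding SLM_fin_distrib_iff CLM_distrib_iff k
    by (intro conjI impI distrib_lattice_monoid.distrib_lattice_monoid_Lex)
qed

end
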